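(* Let $\mathbf{I}$ be a $d$-system of ideals in a ring $R$, $A:=\mathscr{A}(R,\mathbf{I})$, $B:=\mathscr{A}(R^{\mathrm{op}},\mathring{\mathbf{I}})$, and identify $A$ and $B$ with their (faithful) images in $\mathrm{End}_{\mathbb{Z}}(\mathbb{T})$. Then $\mathrm{End}_A(\mathbb{T})=B$ and $\mathrm{End}_B(\mathbb{T})=A$.
   Context: A $d$-system of ideals in $R$ is a collection $\{I_{ij}\mid1\le i,j\le d+1\}$ of two-sided ideals with $I_{ij}I_{jk}\subset I_{ik}$ and $I_{ij}=R$ for $i\ge j$. $\mathscr{A}(R,\mathbf{I}):=\bigoplus_{1\le i,j\le d}X_{ij}$, $X_{ij}:=I_{ij}/I_{i,d+1}$, with multiplication $(x+I_{i,d+1})(y+I_{k,d+1})=\delta_{jk}(xy+I_{i,d+1})\in X_{il}$ for $x\in I_{ij},y\in I_{kl}$. The dual system in $R^{\mathrm{op}}$ is $\mathring{I}_{ij}:=I_{d+2-j,d+2-i}$, so that the $(i,j)$ component of $B$ is $I_{d+2-j,d+2-i}/I_{1,d+2-i}$. Define $\mathbb{T}_{kl}:=R/I_{k,d+2-l}$ for $1\le k,l\le d$ and $\mathbb{T}:=\bigoplus_{k,l}\mathbb{T}_{kl}$. $A$ acts on $\mathbb{T}$ by $(x+I_{i,d+1})\cdot(r+I_{k,d+2-l})=\delta_{jk}(xr+I_{i,d+2-l})\in\mathbb{T}_{il}$ for $x\in I_{ij}$, $r\in R$; $B$ acts by $(x+I_{1,d+2-i})\cdot(r+I_{k,d+2-l})=\delta_{jl}(rx+I_{k,d+2-i})\in\mathbb{T}_{ki}$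 for $x\in I_{d+2-j,d+2-i}$, $r\in R$. These actions are well defined, commute, and are faithful. *)

theory Defs
  imports Main
begin

definition two_sided_ideal :: "'a::ring_1 set \<Rightarrow> bool" where
  "two_sided_ideal J \<longleftrightarrow> 0 \<in> J \<and> (\<forall>x\<in>J. \<forall>y\<in>J. x + y \<in> J) \<and> (\<forall>x\<in>J. - x \<in> J)
     \<and> (\<forall>x\<in>J. \<forall>r. r * x \<in> J \<and> x * r \<in> J)"

definition d_system :: "nat \<Rightarrow> (nat \<Rightarrow> nat \<Rightarrow> 'a::ring_1 set) \<Rightarrow> bool" where
  "d_system d I \<longleftrightarrow>
     (\<forall>i j. 1 \<le> i \<and> i \<le> d+1 \<and> 1 \<le> j \<and> j \<le> d+1 \<longrightarrow> two_sided_ideal (I i j)) \<and>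
     (\<forall>i j k. 1 \<le> i \<and> i \<le> d+1 \<and> 1 \<le> j \<and> j \<le> d+1 \<and> 1 \<le> k \<and> k \<le> d+1 \<longrightarrow>
        (\<forall>x\<in>I i j. \<forall>y\<in>I j k. x * y \<in> I i k)) \<and>
     (\<forall>i j. 1 \<le> i \<and> i \<le> d+1 \<and> 1 \<le> j \<and> j \<le> d+1 \<and> j \<le> i \<longrightarrow> I i j = UNIV)"

definition qcoset :: "'a::ring_1 set \<Rightarrow> 'a \<Rightarrow> 'a set" where
  "qcoset J r = (\<lambda>x. r + x) ` J"

definition quot :: "'a::ring_1 set \<Rightarrow> 'a set set" where
  "quot J = range (qcoset J)"

definition rep :: "'a set \<Rightarrow> 'a" where
  "rep C = (SOME x. x \<in> C)"

definition inrange :: "nat \<Rightarrow> nat \<Rightarrow> nat \<Rightarrow> bool" where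
  "inrange d i j \<longleftrightarrow> 1 \<le> i \<and> i \<le> d \<and> 1 \<le> j \<and> j \<le> d"

text \<open>The module T = \<Oplus>_{k,l} R/I_{k,d+2-l}: an element is a family of cosets indexed by
(k,l) in {1..d}^2, with the dummy value {0} outside that range.\<close>
definition Tcar :: "nat \<Rightarrow> (nat \<Rightarrow> nat \<Rightarrow> 'a::ring_1 set) \<Rightarrow> (nat \<Rightarrow> nat \<Rightarrow> 'a set) set" where
  "Tcar d I = {t. \<forall>k l. (inrange d k l \<longrightarrow> t k l \<in> quot (I k (d+2-l))) \<and>
                         (\<not> inrange d k l \<longrightarrow> t k l = {0})}"

definition Tadd :: "(nat \<Rightarrow> nat \<Rightarrow> 'a::ring_1 set) \<Rightarrow> (nat \<Rightarrow> nat \<Rightarrow> 'a set) \<Rightarrow> (nat \<Rightarrow> nat \<Rightarrow> 'a set)" where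
  "Tadd t s = (\<lambda>k l. {x + y | x y. x \<in> t k l \<and> y \<in> s k l})"

definition Acar :: "nat \<Rightarrow> (nat \<Rightarrow> nat \<Rightarrow> 'a::ring_1 set) \<Rightarrow> (nat \<Rightarrow> nat \<Rightarrow> 'a set) set" where
  "Acar d I = {a. \<forall>i j. (inrange d i j \<longrightarrow> (\<exists>x\<in>I i j. a i j = qcoset (I i (d+1)) x)) \<and>
                         (\<not> inrange d i j \<longrightarrow> a i j = {0})}"

text \<open>B = A(R^op, dual system): (i,j) component I_{d+2-j,d+2-i} / I_{1,d+2-i}.\<close>
definition Bcar :: "nat \<Rightarrow> (nat \<Rightarrow> nat \<Rightarrow> 'a::ring_1 set) \<Rightarrow> (nat \<Rightarrow> nat \<Rightarrow> 'a set) set" where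
  "Bcar d I = {b. \<forall>i j. (inrange d i j \<longrightarrow>
                            (\<exists>x\<in>I (d+2-j) (d+2-i). b i j = qcoset (I 1 (d+2-i)) x)) \<and>
                         (\<not> inrange d i j \<longrightarrow> b i j = {0})}"

definition actA :: "nat \<Rightarrow> (nat \<Rightarrow> nat \<Rightarrow> 'a::ring_1 set) \<Rightarrow> (nat \<Rightarrow> nat \<Rightarrow> 'a set)
    \<Rightarrow> (nat \<Rightarrow> nat \<Rightarrow> 'a set) \<Rightarrow> (nat \<Rightarrow> nat \<Rightarrow> 'a set)" where
  "actA d I a t = (\<lambda>i l. if inrange d i l
      then qcoset (I i (d+2-l)) (\<Sum>j=1..d. rep (a i j) * rep (t j l)) else {0})"

definition actB :: "nat \<Rightarrow> (nat \<Rightarrow> nat \<Rightarrow> 'a::ring_1 set) \<Rightarrow> (nat \<Rightarrow> nat \<Rightarrow> 'a set)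
    \<Rightarrow> (nat \<Rightarrow> nat \<Rightarrow> 'a set) \<Rightarrow> (nat \<Rightarrow> nat \<Rightarrow> 'a set)" where
  "actB d I b t = (\<lambda>k i. if inrange d k i
      then qcoset (I k (d+2-i)) (\<Sum>j=1..d. rep (t k j) * rep (b i j)) else {0})"

definition isEndZ :: "nat \<Rightarrow> (nat \<Rightarrow> nat \<Rightarrow> 'a::ring_1 set)
    \<Rightarrow> ((nat \<Rightarrow> nat \<Rightarrow> 'a set) \<Rightarrow> (nat \<Rightarrow> nat \<Rightarrow> 'a set)) \<Rightarrow> bool" where
  "isEndZ d I f \<longleftrightarrow> (\<forall>t\<in>Tcar d I. f t \<in> Tcar d I) \<and>
     (\<forall>t\<in>Tcar d I. \<forall>s\<in>Tcar d I. f (Tadd t s) = Tadd (f t) (f s))"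

definition EndA :: "nat \<Rightarrow> (nat \<Rightarrow> nat \<Rightarrow> 'a::ring_1 set)
    \<Rightarrow> ((nat \<Rightarrow> nat \<Rightarrow> 'a set) \<Rightarrow> (nat \<Rightarrow> nat \<Rightarrow> 'a set)) set" where
  "EndA d I = {f. isEndZ d I f \<and>
     (\<forall>a\<in>Acar d I. \<forall>t\<in>Tcar d I. f (actA d I a t) = actA d I a (f t))}"

definition EndB :: "nat \<Rightarrow> (nat \<Rightarrow> nat \<Rightarrow> 'a::ring_1 set)
    \<Rightarrow> ((nat \<Rightarrow> nat \<Rightarrow> 'a set) \<Rightarrow> (nat \<Rightarrow> nat \<Rightarrow> 'a set)) set" where
  "EndB d I = {f. isEndZ d I f \<and>
     (\<forall>b\<in>Bcar d I. \<forall>t\<in>Tcar d I. f (actB d I b t) = actB d I b (f t))}"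

end

theory Submission
  imports Defs
begin

text \<open>Both actions are matrix multiplications on representatives, acting from opposite sides, so
they commute by associativity. Conversely, T is generated as an A-module by the elements e_1l
(a 1 in position (1,l)): the l-th column of any t is a \<cdot> e_1l for an a \<in> A supported in the
first column. An A-linear f is therefore determined by the f(e_1l). Every elementary matrix of A
killing e_1l also kills f(e_1l); this forces f(e_1l) into the first row, with (1,i) entry in
I_{d+2-l,d+2-i}, i.e. f(e_1l) = b \<cdot> e_1l for the element b of B with these entries, and then
f = b on all of T. The description of End_B(T) is the mirror image, with rows and the
generators e_k1.\<close>

lemma mem_qcoset_iff: "z \<in> qcoset J x \<longleftrightarrow> z - x \<in> J"
  unfolding qcoset_def image_iff by (metis add_diff_cancel_left' diff_add_cancel add.commute)

context
  fixes J :: "'a::ring_1 set"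
  assumes J: "two_sided_ideal J"
begin

lemma ideal_zero: "0 \<in> J"
  using J by (simp add: two_sided_ideal_def)

lemma ideal_add: "x \<in> J \<Longrightarrow> y \<in> J \<Longrightarrow> x + y \<in> J"
  using J by (simp add: two_sided_ideal_def)

lemma ideal_uminus: "x \<in> J \<Longrightarrow> - x \<in> J"
  using J by (simp add: two_sided_ideal_def)

lemma ideal_diff: "x \<in> J \<Longrightarrow> y \<in> J \<Longrightarrow> x - y \<in> J"
  using ideal_add ideal_uminus by (metis diff_conv_add_uminus)

lemma ideal_sum: "(\<And>j. j \<in> A \<Longrightarrow> f j \<in> J) \<Longrightarrow> sum f A \<in> J"
  by (induction A rule: infinite_finite_induct) (auto intro: ideal_zero ideal_add)

lemma qcoset_eq_iff: "qcoset J x = qcoset J y \<longleftrightarrow> x - y \<in> J"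
proof
  assume "qcoset J x = qcoset J y"
  moreover have "x \<in> qcoset J x"
    by (simp add: mem_qcoset_iff ideal_zero)
  ultimately show "x - y \<in> J"
    by (simp add: mem_qcoset_iff)
next
  assume xy: "x - y \<in> J"
  have "z - x \<in> J \<longleftrightarrow> z - y \<in> J" for z
    using ideal_add[OF _ xy, of "z - x"] ideal_diff[OF _ xy, of "z - y"] by auto
  then show "qcoset J x = qcoset J y"
    by (auto simp: mem_qcoset_iff)
qed

lemma rep_qcoset_diff: "rep (qcoset J x) - x \<in> J"
proof -
  have "rep (qcoset J x) \<in> qcoset J x"
    unfolding rep_def by (rule someI[of _ x]) (simp add: mem_qcoset_iff ideal_zero)
  then show ?thesis
    by (simp add: mem_qcoset_iff)
qed

lemma qcoset_rep: "qcoset J (rep (qcoset J x)) = qcoset J x"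
  by (simp add: qcoset_eq_iff rep_qcoset_diff)

lemma set_plus_qcoset: "{u + v |u v. u \<in> qcoset J x \<and> v \<in> qcoset J y} = qcoset J (x + y)"
proof (intro set_eqI iffI)
  fix z
  assume "z \<in> {u + v |u v. u \<in> qcoset J x \<and> v \<in> qcoset J y}"
  then obtain u v where "z = u + v" "u - x \<in> J" "v - y \<in> J"
    by (auto simp: mem_qcoset_iff)
  moreover have "(u + v) - (x + y) = (u - x) + (v - y)"
    by (simp add: algebra_simps)
  ultimately show "z \<in> qcoset J (x + y)"
    by (metis mem_qcoset_iff ideal_add)
next
  fix z
  assume "z \<in> qcoset J (x + y)"
  then have "z - y \<in> qcoset J x" "y \<in> qcoset J y"
    by (simp_all add: mem_qcoset_iff ideal_zero algebra_simps)
  then show "z \<in> {u + v |u v. u \<in> qcoset J x \<and> v \<in> qcoset J y}"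
    by (metis (mono_tags, lifting) diff_add_cancel mem_Collect_eq)
qed

end

definition mat_unit :: "nat \<Rightarrow> nat \<Rightarrow> nat \<Rightarrow> nat \<Rightarrow> 'a::ring_1" where
  "mat_unit k l i j = of_bool (i = k \<and> j = l)"

lemma sum_mat_unit_mult:
  "finite A \<Longrightarrow> (\<Sum>j\<in>A. mat_unit k l i j * Y j) = (if i = k \<and> l \<in> A then Y l else 0)"
  by (cases "i = k") (auto simp: mat_unit_def)

lemma sum_mult_mat_unit:
  "finite A \<Longrightarrow> (\<Sum>j\<in>A. Y j * mat_unit k l i j) = (if i = k \<and> l \<in> A then Y l else 0)"
  by (cases "i = k") (auto simp: mat_unit_def)

lemma sum_mult_mat_unit_transposed:
  "finite A \<Longrightarrow> (\<Sum>j\<in>A. Y j * mat_unit k l j i) = (if i = l \<and> k \<in> A then Y k else 0)"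
  by (cases "i = l") (auto simp: mat_unit_def)

locale d_system_ideals =
  fixes d :: nat and I :: "nat \<Rightarrow> nat \<Rightarrow> 'a::ring_1 set"
  assumes d_system: "d_system d I"
begin

lemma ideal_I: "1 \<le> i \<Longrightarrow> i \<le> d+1 \<Longrightarrow> 1 \<le> j \<Longrightarrow> j \<le> d+1 \<Longrightarrow> two_sided_ideal (I i j)"
  using d_system unfolding d_system_def by blast

lemma mult_mem_I:
  "x \<in> I i j \<Longrightarrow> y \<in> I j k \<Longrightarrow> 1 \<le> i \<Longrightarrow> i \<le> d+1 \<Longrightarrow> 1 \<le> j \<Longrightarrow> j \<le> d+1
    \<Longrightarrow> 1 \<le> k \<Longrightarrow> k \<le> d+1 \<Longrightarrow> x * y \<in> I i k"
  using d_system unfolding d_system_def by blast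

lemma I_eq_UNIV: "1 \<le> j \<Longrightarrow> j \<le> i \<Longrightarrow> i \<le> d+1 \<Longrightarrow> I i j = UNIV"
  using d_system unfolding d_system_def by auto

lemma ideal_T: "inrange d k l \<Longrightarrow> two_sided_ideal (I k (d+2-l))"
  by (rule ideal_I) (auto simp: inrange_def)

lemma zero_mem_I: "inrange d i j \<Longrightarrow> 0 \<in> I i j"
  by (rule ideal_zero, rule ideal_I) (auto simp: inrange_def)

lemma zero_mem_B_entry: "inrange d i j \<Longrightarrow> 0 \<in> I (d+2-j) (d+2-i)"
  by (rule ideal_zero, rule ideal_I) (auto simp: inrange_def)

lemma B_entry_eq_UNIV: "inrange d i j \<Longrightarrow> j \<le> i \<Longrightarrow> I (d+2-j) (d+2-i) = UNIV"
  by (rule I_eq_UNIV) (auto simp: inrange_def)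

definition T_of :: "(nat \<Rightarrow> nat \<Rightarrow> 'a) \<Rightarrow> nat \<Rightarrow> nat \<Rightarrow> 'a set" where
  "T_of Y = (\<lambda>k l. if inrange d k l then qcoset (I k (d+2-l)) (Y k l) else {0})"

definition A_of :: "(nat \<Rightarrow> nat \<Rightarrow> 'a) \<Rightarrow> nat \<Rightarrow> nat \<Rightarrow> 'a set" where
  "A_of M = (\<lambda>i j. if inrange d i j then qcoset (I i (d+1)) (M i j) else {0})"

definition B_of :: "(nat \<Rightarrow> nat \<Rightarrow> 'a) \<Rightarrow> nat \<Rightarrow> nat \<Rightarrow> 'a set" where
  "B_of M = (\<lambda>i j. if inrange d i j then qcoset (I 1 (d+2-i)) (M i j) else {0})"

definition A_matrix :: "(nat \<Rightarrow> nat \<Rightarrow> 'a) \<Rightarrow> bool" where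
  "A_matrix M \<longleftrightarrow> (\<forall>i j. inrange d i j \<longrightarrow> M i j \<in> I i j)"

definition B_matrix :: "(nat \<Rightarrow> nat \<Rightarrow> 'a) \<Rightarrow> bool" where
  "B_matrix M \<longleftrightarrow> (\<forall>i j. inrange d i j \<longrightarrow> M i j \<in> I (d+2-j) (d+2-i))"

definition T_zero :: "nat \<Rightarrow> nat \<Rightarrow> 'a set" where
  "T_zero = T_of (\<lambda>_ _. 0)"

lemma T_of_in_Tcar: "T_of Y \<in> Tcar d I"
  unfolding Tcar_def T_of_def quot_def by auto

lemma T_of_rep: "t \<in> Tcar d I \<Longrightarrow> T_of (\<lambda>k l. rep (t k l)) = t"
proof (intro ext)
  fix k l
  assume t: "t \<in> Tcar d I"
  show "T_of (\<lambda>k l. rep (t k l)) k l = t k l"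
  proof (cases "inrange d k l")
    case True
    then obtain x where "t k l = qcoset (I k (d+2-l)) x"
      using t unfolding Tcar_def quot_def by blast
    then show ?thesis
      using True qcoset_rep[OF ideal_T[OF True]] by (simp add: T_of_def)
  qed (use t in \<open>simp add: T_of_def Tcar_def\<close>)
qed

lemma Tcar_cases:
  assumes "t \<in> Tcar d I"
  obtains Y where "t = T_of Y"
  using T_of_rep[OF assms] by metis

lemma T_of_eq_iff: "T_of Y = T_of Y' \<longleftrightarrow> (\<forall>k l. inrange d k l \<longrightarrow> Y k l - Y' k l \<in> I k (d+2-l))"
proof
  assume "T_of Y = T_of Y'"
  then show "\<forall>k l. inrange d k l \<longrightarrow> Y k l - Y' k l \<in> I k (d+2-l)"
    by (metis (mono_tags) T_of_def qcoset_eq_iff[OF ideal_T])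
next
  assume "\<forall>k l. inrange d k l \<longrightarrow> Y k l - Y' k l \<in> I k (d+2-l)"
  then show "T_of Y = T_of Y'"
    using qcoset_eq_iff[OF ideal_T] by (intro ext) (simp add: T_of_def)
qed

lemma T_of_cong: "(\<And>k l. inrange d k l \<Longrightarrow> Y k l = Y' k l) \<Longrightarrow> T_of Y = T_of Y'"
  unfolding T_of_eq_iff using ideal_zero[OF ideal_T] by simp

lemma T_of_eq_zero_iff: "T_of Y = T_zero \<longleftrightarrow> (\<forall>k l. inrange d k l \<longrightarrow> Y k l \<in> I k (d+2-l))"
  by (simp add: T_zero_def T_of_eq_iff)

lemma Tadd_T_of: "Tadd (T_of Y) (T_of Y') = T_of (\<lambda>k l. Y k l + Y' k l)"
  using set_plus_qcoset[OF ideal_T] by (intro ext) (simp add: Tadd_def T_of_def)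

lemma Tadd_in_Tcar: "t \<in> Tcar d I \<Longrightarrow> s \<in> Tcar d I \<Longrightarrow> Tadd t s \<in> Tcar d I"
  by (metis Tcar_cases Tadd_T_of T_of_in_Tcar)

lemma Acar_cases:
  assumes "a \<in> Acar d I"
  obtains M where "a = A_of M" and "A_matrix M"
proof -
  have "\<forall>i j. \<exists>x. inrange d i j \<longrightarrow> x \<in> I i j \<and> a i j = qcoset (I i (d+1)) x"
    using assms unfolding Acar_def by blast
  then obtain M where M: "\<forall>i j. inrange d i j \<longrightarrow> M i j \<in> I i j \<and> a i j = qcoset (I i (d+1)) (M i j)"
    by metis
  then have "a = A_of M"
    using assms by (intro ext) (simp add: A_of_def Acar_def)
  with M that show thesis
    by (simp add: A_matrix_def)
qed

lemma A_of_in_Acar: "A_matrix M \<Longrightarrow> A_of M \<in> Acar d I"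
  unfolding Acar_def A_of_def A_matrix_def by auto

lemma Bcar_cases:
  assumes "b \<in> Bcar d I"
  obtains M where "b = B_of M" and "B_matrix M"
proof -
  have "\<forall>i j. \<exists>x. inrange d i j \<longrightarrow> x \<in> I (d+2-j) (d+2-i) \<and> b i j = qcoset (I 1 (d+2-i)) x"
    using assms unfolding Bcar_def by blast
  then obtain M where
    M: "\<forall>i j. inrange d i j \<longrightarrow> M i j \<in> I (d+2-j) (d+2-i) \<and> b i j = qcoset (I 1 (d+2-i)) (M i j)"
    by metis
  then have "b = B_of M"
    using assms by (intro ext) (simp add: B_of_def Bcar_def)
  with M that show thesis
    by (simp add: B_matrix_def)
qed

lemma B_of_in_Bcar: "B_matrix M \<Longrightarrow> B_of M \<in> Bcar d I"
  unfolding Bcar_def B_of_def B_matrix_def by auto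

text \<open>Products of representatives are independent of the choice of representatives; this is
what makes the actions well defined.\<close>

lemma mult_congruent_A:
  assumes x: "x' - x \<in> I i (d+1)" "x \<in> I i j" and y: "y' - y \<in> I j (d+2-l)"
    and il: "inrange d i l" and j: "1 \<le> j" "j \<le> d"
  shows "x' * y' - x * y \<in> I i (d+2-l)"
proof -
  have "I (d+1) (d+2-l) = UNIV"
    using il by (intro I_eq_UNIV) (auto simp: inrange_def)
  then have "(x' - x) * y' \<in> I i (d+2-l)"
    by (intro mult_mem_I[OF x(1)]) (use il in \<open>auto simp: inrange_def\<close>)
  moreover have "x * (y' - y) \<in> I i (d+2-l)"
    by (rule mult_mem_I[OF x(2) y]) (use il j in \<open>auto simp: inrange_def\<close>)
  moreover have "x' * y' - x * y = (x' - x) * y' + x * (y' - y)"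
    by (simp add: algebra_simps)
  ultimately show ?thesis
    using ideal_add[OF ideal_T[OF il]] by simp
qed

lemma mult_congruent_B:
  assumes x: "x' - x \<in> I 1 (d+2-i)" "x \<in> I (d+2-j) (d+2-i)" and y: "y' - y \<in> I k (d+2-j)"
    and ki: "inrange d k i" and j: "1 \<le> j" "j \<le> d"
  shows "y' * x' - y * x \<in> I k (d+2-i)"
proof -
  have "I k 1 = UNIV"
    using ki by (intro I_eq_UNIV) (auto simp: inrange_def)
  then have "y' * (x' - x) \<in> I k (d+2-i)"
    by (intro mult_mem_I[OF _ x(1)]) (use ki in \<open>auto simp: inrange_def\<close>)
  moreover have "(y' - y) * x \<in> I k (d+2-i)"
    by (rule mult_mem_I[OF y x(2)]) (use ki j in \<open>auto simp: inrange_def\<close>)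
  moreover have "y' * x' - y * x = y' * (x' - x) + (y' - y) * x"
    by (simp add: algebra_simps)
  ultimately show ?thesis
    using ideal_add[OF ideal_T[OF ki]] by simp
qed

lemma actA_A_of:
  assumes "A_matrix M"
  shows "actA d I (A_of M) (T_of Y) = T_of (\<lambda>i l. \<Sum>j=1..d. M i j * Y j l)"
proof (intro ext)
  fix i l
  show "actA d I (A_of M) (T_of Y) i l = T_of (\<lambda>i l. \<Sum>j=1..d. M i j * Y j l) i l"
  proof (cases "inrange d i l")
    case il: True
    have "(\<Sum>j=1..d. rep (A_of M i j) * rep (T_of Y j l)) - (\<Sum>j=1..d. M i j * Y j l)
        \<in> I i (d+2-l)"
      unfolding sum_subtractf[symmetric]
    proof (rule ideal_sum[OF ideal_T[OF il]])
      fix j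
      assume "j \<in> {1..d}"
      then have ij: "inrange d i j" and jl: "inrange d j l"
        using il by (auto simp: inrange_def)
      show "rep (A_of M i j) * rep (T_of Y j l) - M i j * Y j l \<in> I i (d+2-l)"
        using ij jl il assms rep_qcoset_diff[OF ideal_I, of i "d+1" "M i j"]
          rep_qcoset_diff[OF ideal_T[OF jl], of "Y j l"]
        by (intro mult_congruent_A[of _ _ i j]) (auto simp: A_matrix_def A_of_def T_of_def inrange_def)
    qed
    then show ?thesis
      using il qcoset_eq_iff[OF ideal_T[OF il]] by (simp add: actA_def T_of_def)
  qed (simp add: actA_def T_of_def)
qed

lemma actB_B_of:
  assumes "B_matrix M"
  shows "actB d I (B_of M) (T_of Y) = T_of (\<lambda>k i. \<Sum>j=1..d. Y k j * M i j)"
proof (intro ext)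
  fix k i
  show "actB d I (B_of M) (T_of Y) k i = T_of (\<lambda>k i. \<Sum>j=1..d. Y k j * M i j) k i"
  proof (cases "inrange d k i")
    case ki: True
    have "(\<Sum>j=1..d. rep (T_of Y k j) * rep (B_of M i j)) - (\<Sum>j=1..d. Y k j * M i j)
        \<in> I k (d+2-i)"
      unfolding sum_subtractf[symmetric]
    proof (rule ideal_sum[OF ideal_T[OF ki]])
      fix j
      assume "j \<in> {1..d}"
      then have ij: "inrange d i j" and kj: "inrange d k j"
        using ki by (auto simp: inrange_def)
      show "rep (T_of Y k j) * rep (B_of M i j) - Y k j * M i j \<in> I k (d+2-i)"
        using ij kj ki assms rep_qcoset_diff[OF ideal_I, of 1 "d+2-i" "M i j"]
          rep_qcoset_diff[OF ideal_T[OF kj], of "Y k j"]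
        by (intro mult_congruent_B[of _ _ i j]) (auto simp: B_matrix_def B_of_def T_of_def inrange_def)
    qed
    then show ?thesis
      using ki qcoset_eq_iff[OF ideal_T[OF ki]] by (simp add: actB_def T_of_def)
  qed (simp add: actB_def T_of_def)
qed

lemma actA_in_Tcar: "actA d I a t \<in> Tcar d I"
  unfolding actA_def using T_of_in_Tcar by (simp add: T_of_def)

lemma actB_in_Tcar: "actB d I b t \<in> Tcar d I"
  unfolding actB_def using T_of_in_Tcar by (simp add: T_of_def)

lemma actA_actB_commute:
  assumes "a \<in> Acar d I" "b \<in> Bcar d I" "t \<in> Tcar d I"
  shows "actA d I a (actB d I b t) = actB d I b (actA d I a t)"
proof -
  obtain MA where a: "a = A_of MA" and MA: "A_matrix MA"
    using Acar_cases[OF assms(1)] by blast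
  obtain MB where b: "b = B_of MB" and MB: "B_matrix MB"
    using Bcar_cases[OF assms(2)] by blast
  obtain Y where t: "t = T_of Y"
    using Tcar_cases[OF assms(3)] by blast
  have "(\<Sum>j=1..d. MA i j * (\<Sum>m=1..d. Y j m * MB l m))
      = (\<Sum>m=1..d. (\<Sum>j=1..d. MA i j * Y j m) * MB l m)" for i l
    unfolding sum_distrib_left sum_distrib_right mult.assoc by (rule sum.swap)
  then show ?thesis
    unfolding a b t actA_A_of[OF MA] actB_B_of[OF MB] by simp
qed

lemma actA_Tadd:
  assumes "a \<in> Acar d I" "t \<in> Tcar d I" "s \<in> Tcar d I"
  shows "actA d I a (Tadd t s) = Tadd (actA d I a t) (actA d I a s)"
proof -
  obtain M where a: "a = A_of M" and M: "A_matrix M"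
    using Acar_cases[OF assms(1)] by blast
  obtain Y Y' where t: "t = T_of Y" and s: "s = T_of Y'"
    using assms(2,3) by (metis Tcar_cases)
  show ?thesis
    unfolding a t s Tadd_T_of actA_A_of[OF M] by (simp add: distrib_left sum.distrib)
qed

lemma actB_Tadd:
  assumes "b \<in> Bcar d I" "t \<in> Tcar d I" "s \<in> Tcar d I"
  shows "actB d I b (Tadd t s) = Tadd (actB d I b t) (actB d I b s)"
proof -
  obtain M where b: "b = B_of M" and M: "B_matrix M"
    using Bcar_cases[OF assms(1)] by blast
  obtain Y Y' where t: "t = T_of Y" and s: "s = T_of Y'"
    using assms(2,3) by (metis Tcar_cases)
  show ?thesis
    unfolding b t s Tadd_T_of actB_B_of[OF M] by (simp add: distrib_right sum.distrib)
qed

lemma actB_in_EndA: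
  assumes "b \<in> Bcar d I"
  shows "actB d I b \<in> EndA d I"
  using assms actA_actB_commute actB_Tadd
  by (simp add: EndA_def isEndZ_def actB_in_Tcar)

lemma actA_in_EndB:
  assumes "a \<in> Acar d I"
  shows "actA d I a \<in> EndB d I"
  using assms actA_actB_commute actA_Tadd
  by (simp add: EndB_def isEndZ_def actA_in_Tcar)

lemma A_matrix_zero: "A_matrix (\<lambda>_ _. 0)"
  by (simp add: A_matrix_def zero_mem_I)

lemma B_matrix_zero: "B_matrix (\<lambda>_ _. 0)"
  unfolding B_matrix_def using zero_mem_B_entry by simp

lemma actA_T_zero: "a \<in> Acar d I \<Longrightarrow> actA d I a T_zero = T_zero"
  by (elim Acar_cases) (simp add: T_zero_def actA_A_of)

lemma actB_T_zero: "b \<in> Bcar d I \<Longrightarrow> actB d I b T_zero = T_zero"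
  by (elim Bcar_cases) (simp add: T_zero_def actB_B_of)

lemma EndA_T_zero:
  assumes f: "f \<in> EndA d I"
  shows "f T_zero = T_zero"
proof -
  have zero_action: "actA d I (A_of (\<lambda>_ _. 0)) t = T_zero" if "t \<in> Tcar d I" for t
    using that by (elim Tcar_cases) (simp add: T_zero_def actA_A_of A_matrix_zero)
  have zero_in_Tcar: "T_zero \<in> Tcar d I"
    by (simp add: T_zero_def T_of_in_Tcar)
  have "f T_zero = f (actA d I (A_of (\<lambda>_ _. 0)) T_zero)"
    by (simp add: zero_action zero_in_Tcar)
  also have "\<dots> = actA d I (A_of (\<lambda>_ _. 0)) (f T_zero)"
    using f A_of_in_Acar[OF A_matrix_zero] zero_in_Tcar by (simp add: EndA_def)
  also have "\<dots> = T_zero"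
    using f zero_in_Tcar by (simp add: zero_action EndA_def isEndZ_def)
  finally show ?thesis .
qed

lemma EndB_T_zero:
  assumes f: "f \<in> EndB d I"
  shows "f T_zero = T_zero"
proof -
  have zero_action: "actB d I (B_of (\<lambda>_ _. 0)) t = T_zero" if "t \<in> Tcar d I" for t
    using that by (elim Tcar_cases) (simp add: T_zero_def actB_B_of B_matrix_zero)
  have zero_in_Tcar: "T_zero \<in> Tcar d I"
    by (simp add: T_zero_def T_of_in_Tcar)
  have "f T_zero = f (actB d I (B_of (\<lambda>_ _. 0)) T_zero)"
    by (simp add: zero_action zero_in_Tcar)
  also have "\<dots> = actB d I (B_of (\<lambda>_ _. 0)) (f T_zero)"
    using f B_of_in_Bcar[OF B_matrix_zero] zero_in_Tcar by (simp add: EndB_def)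
  also have "\<dots> = T_zero"
    using f zero_in_Tcar by (simp add: zero_action EndB_def isEndZ_def)
  finally show ?thesis .
qed

definition T_restrict :: "(nat \<Rightarrow> nat \<Rightarrow> bool) \<Rightarrow> (nat \<Rightarrow> nat \<Rightarrow> 'a set) \<Rightarrow> nat \<Rightarrow> nat \<Rightarrow> 'a set" where
  "T_restrict S t = T_of (\<lambda>k l. if S k l then rep (t k l) else 0)"

lemma T_restrict_in_Tcar: "T_restrict S t \<in> Tcar d I"
  by (simp add: T_restrict_def T_of_in_Tcar)

lemma Tadd_T_restrict:
  "(\<And>k l. \<not> (S k l \<and> S' k l)) \<Longrightarrow> Tadd (T_restrict S t) (T_restrict S' t) = T_restrict (\<lambda>k l. S k l \<or> S' k l) t"
  unfolding T_restrict_def Tadd_T_of by (rule T_of_cong) auto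

lemma T_restrict_all: "t \<in> Tcar d I \<Longrightarrow> (\<And>k l. inrange d k l \<Longrightarrow> S k l) \<Longrightarrow> T_restrict S t = t"
  unfolding T_restrict_def by (subst (2) T_of_rep[symmetric]) (auto intro: T_of_cong)

lemma T_restrict_none: "(\<And>k l. inrange d k l \<Longrightarrow> \<not> S k l) \<Longrightarrow> T_restrict S t = T_zero"
  unfolding T_restrict_def T_zero_def by (rule T_of_cong) auto

lemma additive_maps_eq_by_slices:
  assumes f_add: "\<And>t s. t \<in> Tcar d I \<Longrightarrow> s \<in> Tcar d I \<Longrightarrow> f (Tadd t s) = Tadd (f t) (f s)"
    and g_add: "\<And>t s. t \<in> Tcar d I \<Longrightarrow> s \<in> Tcar d I \<Longrightarrow> g (Tadd t s) = Tadd (g t) (g s)"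
    and zero: "f T_zero = g T_zero"
    and p: "\<And>k l. inrange d k l \<Longrightarrow> 1 \<le> p k l \<and> p k l \<le> d"
    and slices: "\<And>m. 1 \<le> m \<Longrightarrow> m \<le> d \<Longrightarrow>
      f (T_restrict (\<lambda>k l. p k l = m) t) = g (T_restrict (\<lambda>k l. p k l = m) t)"
    and t: "t \<in> Tcar d I"
  shows "f t = g t"
proof -
  have "f (T_restrict (\<lambda>k l. p k l \<le> m) t) = g (T_restrict (\<lambda>k l. p k l \<le> m) t)" if "m \<le> d" for m
    using that
  proof (induction m)
    case 0
    have "T_restrict (\<lambda>k l. p k l \<le> 0) t = T_zero"
      by (rule T_restrict_none) (use p in fastforce)
    then show ?case
      using zero by simp
  next
    case (Suc m)
    have split: "T_restrict (\<lambda>k l. p k l \<le> Suc m) t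
        = Tadd (T_restrict (\<lambda>k l. p k l \<le> m) t) (T_restrict (\<lambda>k l. p k l = Suc m) t)"
      by (subst Tadd_T_restrict) (auto simp: le_Suc_eq)
    show ?case
      unfolding split using Suc slices[of "Suc m"]
      by (simp add: f_add g_add T_restrict_in_Tcar)
  qed
  moreover have "T_restrict (\<lambda>k l. p k l \<le> d) t = t"
    using p by (intro T_restrict_all[OF t]) blast
  ultimately show ?thesis
    by (metis order_refl)
qed

definition T_unit :: "nat \<Rightarrow> nat \<Rightarrow> nat \<Rightarrow> nat \<Rightarrow> 'a set" where
  "T_unit k l = T_of (mat_unit k l)"

lemma T_unit_in_Tcar: "T_unit k l \<in> Tcar d I"
  by (simp add: T_unit_def T_of_in_Tcar)

lemma EndA_cong: "(\<And>t. t \<in> Tcar d I \<Longrightarrow> f t = g t) \<Longrightarrow> f \<in> EndA d I \<longleftrightarrow> g \<in> EndA d I"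
  by (simp add: EndA_def isEndZ_def Tadd_in_Tcar actA_in_Tcar)

lemma A_matrix_mat_unit: "1 \<le> j \<Longrightarrow> j \<le> k \<Longrightarrow> k \<le> d \<Longrightarrow> A_matrix (mat_unit k j)"
  using I_eq_UNIV[of j k] zero_mem_I by (auto simp: A_matrix_def mat_unit_def)

lemma actA_mat_unit:
  "1 \<le> j \<Longrightarrow> j \<le> k \<Longrightarrow> k \<le> d \<Longrightarrow>
    actA d I (A_of (mat_unit k j)) (T_of Y) = T_of (\<lambda>i l. if i = k then Y j l else 0)"
  by (simp add: actA_A_of A_matrix_mat_unit sum_mat_unit_mult)

lemma EndA_row_mem:
  assumes f: "f \<in> EndA d I" and t: "t \<in> Tcar d I" and jk: "1 \<le> j" "j \<le> k" "k \<le> d"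
    and kills: "actA d I (A_of (mat_unit k j)) t = T_zero" and l: "1 \<le> l" "l \<le> d"
  shows "rep (f t j l) \<in> I k (d+2-l)"
proof -
  have ft: "f t \<in> Tcar d I"
    using f t by (simp add: EndA_def isEndZ_def)
  have "actA d I (A_of (mat_unit k j)) (f t) = f (actA d I (A_of (mat_unit k j)) t)"
    using f t A_of_in_Acar[OF A_matrix_mat_unit[OF jk]] by (simp add: EndA_def)
  also have "\<dots> = T_zero"
    using kills EndA_T_zero[OF f] by simp
  finally have "T_of (\<lambda>i l. if i = k then rep (f t j l) else 0) = T_zero"
    using actA_mat_unit[OF jk, of "\<lambda>k l. rep (f t k l)"] T_of_rep[OF ft] by simp
  moreover have "inrange d k l"
    using jk l by (simp add: inrange_def)
  ultimately have "(if k = k then rep (f t j l) else 0) \<in> I k (d+2-l)"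
    unfolding T_of_eq_zero_iff by blast
  then show ?thesis
    by simp
qed

lemma actA_mat_unit_kills_T_unit:
  assumes jk: "1 \<le> j" "j \<le> k" "k \<le> d" and first: "j = 1 \<Longrightarrow> d+2-l \<le> k"
  shows "actA d I (A_of (mat_unit k j)) (T_unit 1 l) = T_zero"
  unfolding T_unit_def actA_mat_unit[OF jk] T_of_eq_zero_iff
proof (intro allI impI)
  fix i l'
  assume il': "inrange d i l'"
  show "(if i = k then mat_unit 1 l j l' else 0) \<in> I i (d+2-l')"
  proof (cases "i = k \<and> j = 1 \<and> l' = l")
    case True
    then have "I k (d+2-l) = UNIV"
      using first il' by (intro I_eq_UNIV) (auto simp: inrange_def)
    then show ?thesis
      using True by simp
  next
    case False
    then show ?thesis
      using zero_mem_I[OF il'] ideal_zero[OF ideal_T[OF il']] by (auto simp: mat_unit_def)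
  qed
qed

lemma EndA_T_unit_lower_row:
  assumes f: "f \<in> EndA d I" and "2 \<le> k" "k \<le> d" "1 \<le> i" "i \<le> d"
  shows "rep (f (T_unit 1 l) k i) \<in> I k (d+2-i)"
  using assms by (intro EndA_row_mem[OF f T_unit_in_Tcar _ _ _ actA_mat_unit_kills_T_unit]) auto

lemma EndA_T_unit_first_row:
  assumes f: "f \<in> EndA d I" and il: "inrange d i l"
  shows "rep (f (T_unit 1 l) 1 i) \<in> I (d+2-l) (d+2-i)"
proof (cases "l = 1")
  case True
  have "I (d+1) (d+2-i) = UNIV"
    using il by (intro I_eq_UNIV) (auto simp: inrange_def)
  then show ?thesis
    using True by simp
next
  case False
  then show ?thesis
    using il by (intro EndA_row_mem[OF f T_unit_in_Tcar _ _ _ actA_mat_unit_kills_T_unit])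
      (auto simp: inrange_def)
qed

definition B_of_EndA :: "((nat \<Rightarrow> nat \<Rightarrow> 'a set) \<Rightarrow> nat \<Rightarrow> nat \<Rightarrow> 'a set) \<Rightarrow> nat \<Rightarrow> nat \<Rightarrow> 'a set" where
  "B_of_EndA f = B_of (\<lambda>i l. rep (f (T_unit 1 l) 1 i))"

lemma B_matrix_EndA: "f \<in> EndA d I \<Longrightarrow> B_matrix (\<lambda>i l. rep (f (T_unit 1 l) 1 i))"
  unfolding B_matrix_def using EndA_T_unit_first_row by simp

lemma B_of_EndA_in_Bcar: "f \<in> EndA d I \<Longrightarrow> B_of_EndA f \<in> Bcar d I"
  unfolding B_of_EndA_def by (rule B_of_in_Bcar[OF B_matrix_EndA])

lemma EndA_T_unit:
  assumes f: "f \<in> EndA d I" and l: "1 \<le> l" "l \<le> d"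
  shows "f (T_unit 1 l) = actB d I (B_of_EndA f) (T_unit 1 l)"
proof -
  let ?s = "f (T_unit 1 l)"
  have "actB d I (B_of_EndA f) (T_unit 1 l) = T_of (\<lambda>k i. if k = 1 then rep (?s 1 i) else 0)"
    unfolding B_of_EndA_def T_unit_def[of 1 l] actB_B_of[OF B_matrix_EndA[OF f]]
    using l by (intro T_of_cong) (simp add: sum_mat_unit_mult T_unit_def)
  also have "\<dots> = T_of (\<lambda>k i. rep (?s k i))"
    unfolding T_of_eq_iff
  proof (intro allI impI)
    fix k i
    assume ki: "inrange d k i"
    show "(if k = 1 then rep (?s 1 i) else 0) - rep (?s k i) \<in> I k (d+2-i)"
    proof (cases "k = 1")
      case True
      then show ?thesis
        using ideal_zero[OF ideal_T[OF ki]] by simp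
    next
      case False
      then show ?thesis
        using ki EndA_T_unit_lower_row[OF f, of k i l] ideal_uminus[OF ideal_T[OF ki]]
        by (simp add: inrange_def)
    qed
  qed
  also have "\<dots> = ?s"
    using f T_unit_in_Tcar by (simp add: T_of_rep EndA_def isEndZ_def)
  finally show ?thesis
    by simp
qed

lemma A_matrix_first_column: "A_matrix (\<lambda>i j. if j = 1 then x i else 0)"
  using I_eq_UNIV[of 1] zero_mem_I by (auto simp: A_matrix_def inrange_def)

lemma actA_first_column_T_unit:
  assumes "1 \<le> l" "l \<le> d"
  shows "actA d I (A_of (\<lambda>i j. if j = 1 then rep (t i l) else 0)) (T_unit 1 l)
    = T_restrict (\<lambda>k l'. l' = l) t"
  unfolding T_unit_def T_restrict_def actA_A_of[OF A_matrix_first_column]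
  using assms by (intro T_of_cong) (simp add: sum_mult_mat_unit_transposed)

lemma EndA_eq_actB:
  assumes f: "f \<in> EndA d I" and t: "t \<in> Tcar d I"
  shows "f t = actB d I (B_of_EndA f) t"
proof (rule additive_maps_eq_by_slices[where p = "\<lambda>k l. l", OF _ _ _ _ _ t])
  fix m
  assume m: "1 \<le> m" "m \<le> d"
  define a where "a = A_of (\<lambda>i j. if j = 1 then rep (t i m) else 0)"
  have a_A: "a \<in> Acar d I"
    unfolding a_def by (rule A_of_in_Acar[OF A_matrix_first_column])
  have "f (T_restrict (\<lambda>k l. l = m) t) = f (actA d I a (T_unit 1 m))"
    using actA_first_column_T_unit[OF m] by (simp add: a_def)
  also have "\<dots> = actA d I a (f (T_unit 1 m))"
    using f a_A T_unit_in_Tcar by (simp add: EndA_def)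
  also have "\<dots> = actA d I a (actB d I (B_of_EndA f) (T_unit 1 m))"
    using EndA_T_unit[OF f m] by simp
  also have "\<dots> = actB d I (B_of_EndA f) (actA d I a (T_unit 1 m))"
    by (rule actA_actB_commute[OF a_A B_of_EndA_in_Bcar[OF f] T_unit_in_Tcar])
  also have "\<dots> = actB d I (B_of_EndA f) (T_restrict (\<lambda>k l. l = m) t)"
    using actA_first_column_T_unit[OF m] by (simp add: a_def)
  finally show "f (T_restrict (\<lambda>k l. l = m) t) = actB d I (B_of_EndA f) (T_restrict (\<lambda>k l. l = m) t)" .
qed (use f B_of_EndA_in_Bcar[OF f] in
      \<open>auto simp: EndA_def isEndZ_def EndA_T_zero actB_T_zero actB_Tadd inrange_def\<close>)

lemma EndA_iff: "f \<in> EndA d I \<longleftrightarrow> (\<exists>b\<in>Bcar d I. \<forall>t\<in>Tcar d I. f t = actB d I b t)"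
proof
  assume f: "f \<in> EndA d I"
  with B_of_EndA_in_Bcar[OF f] show "\<exists>b\<in>Bcar d I. \<forall>t\<in>Tcar d I. f t = actB d I b t"
    using EndA_eq_actB by blast
next
  assume "\<exists>b\<in>Bcar d I. \<forall>t\<in>Tcar d I. f t = actB d I b t"
  then show "f \<in> EndA d I"
    using EndA_cong actB_in_EndA by metis
qed

lemma EndB_cong: "(\<And>t. t \<in> Tcar d I \<Longrightarrow> f t = g t) \<Longrightarrow> f \<in> EndB d I \<longleftrightarrow> g \<in> EndB d I"
  by (simp add: EndB_def isEndZ_def Tadd_in_Tcar actB_in_Tcar)

lemma B_matrix_mat_unit: "1 \<le> j \<Longrightarrow> j \<le> i \<Longrightarrow> i \<le> d \<Longrightarrow> B_matrix (mat_unit i j)"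
  unfolding B_matrix_def mat_unit_def using B_entry_eq_UNIV zero_mem_B_entry by auto

lemma actB_mat_unit:
  "1 \<le> j \<Longrightarrow> j \<le> i \<Longrightarrow> i \<le> d \<Longrightarrow>
    actB d I (B_of (mat_unit i j)) (T_of Y) = T_of (\<lambda>k i'. if i' = i then Y k j else 0)"
  by (simp add: actB_B_of B_matrix_mat_unit sum_mult_mat_unit)

lemma EndB_column_mem:
  assumes f: "f \<in> EndB d I" and t: "t \<in> Tcar d I" and ji: "1 \<le> j" "j \<le> i" "i \<le> d"
    and kills: "actB d I (B_of (mat_unit i j)) t = T_zero" and k: "1 \<le> k" "k \<le> d"
  shows "rep (f t k j) \<in> I k (d+2-i)"
proof -
  have ft: "f t \<in> Tcar d I"
    using f t by (simp add: EndB_def isEndZ_def)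
  have "actB d I (B_of (mat_unit i j)) (f t) = f (actB d I (B_of (mat_unit i j)) t)"
    using f t B_of_in_Bcar[OF B_matrix_mat_unit[OF ji]] by (simp add: EndB_def)
  also have "\<dots> = T_zero"
    using kills EndB_T_zero[OF f] by simp
  finally have "T_of (\<lambda>k i'. if i' = i then rep (f t k j) else 0) = T_zero"
    using actB_mat_unit[OF ji, of "\<lambda>k l. rep (f t k l)"] T_of_rep[OF ft] by simp
  moreover have "inrange d k i"
    using ji k by (simp add: inrange_def)
  ultimately have "(if i = i then rep (f t k j) else 0) \<in> I k (d+2-i)"
    unfolding T_of_eq_zero_iff by blast
  then show ?thesis
    by simp
qed

lemma actB_mat_unit_kills_T_unit:
  assumes ji: "1 \<le> j" "j \<le> i" "i \<le> d" and first: "j = 1 \<Longrightarrow> d+2-i \<le> k"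
  shows "actB d I (B_of (mat_unit i j)) (T_unit k 1) = T_zero"
  unfolding T_unit_def actB_mat_unit[OF ji] T_of_eq_zero_iff
proof (intro allI impI)
  fix k' i'
  assume ki': "inrange d k' i'"
  show "(if i' = i then mat_unit k 1 k' j else 0) \<in> I k' (d+2-i')"
  proof (cases "i' = i \<and> k' = k \<and> j = 1")
    case True
    then have "I k (d+2-i) = UNIV"
      using first ki' by (intro I_eq_UNIV) (auto simp: inrange_def)
    then show ?thesis
      using True by simp
  next
    case False
    then show ?thesis
      using ideal_zero[OF ideal_T[OF ki']] by (auto simp: mat_unit_def)
  qed
qed

lemma EndB_T_unit_later_column:
  assumes f: "f \<in> EndB d I" and "2 \<le> i" "i \<le> d" "1 \<le> k'" "k' \<le> d"
  shows "rep (f (T_unit k 1) k' i) \<in> I k' (d+2-i)"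
  using assms by (intro EndB_column_mem[OF f T_unit_in_Tcar _ _ _ actB_mat_unit_kills_T_unit]) auto

lemma EndB_T_unit_first_column:
  assumes f: "f \<in> EndB d I" and kk: "inrange d k' k"
  shows "rep (f (T_unit k 1) k' 1) \<in> I k' k"
proof (cases "k = 1")
  case True
  have "I k' 1 = UNIV"
    using kk by (intro I_eq_UNIV) (auto simp: inrange_def)
  then show ?thesis
    using True by simp
next
  case False
  then have "rep (f (T_unit k 1) k' 1) \<in> I k' (d+2-(d+2-k))"
    using kk by (intro EndB_column_mem[OF f T_unit_in_Tcar _ _ _ actB_mat_unit_kills_T_unit])
      (auto simp: inrange_def)
  then show ?thesis
    using kk by (simp add: inrange_def)
qed

definition A_of_EndB :: "((nat \<Rightarrow> nat \<Rightarrow> 'a set) \<Rightarrow> nat \<Rightarrow> nat \<Rightarrow> 'a set) \<Rightarrow> nat \<Rightarrow> nat \<Rightarrow> 'a set" where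
  "A_of_EndB f = A_of (\<lambda>k' k. rep (f (T_unit k 1) k' 1))"

lemma A_matrix_EndB: "f \<in> EndB d I \<Longrightarrow> A_matrix (\<lambda>k' k. rep (f (T_unit k 1) k' 1))"
  unfolding A_matrix_def using EndB_T_unit_first_column by simp

lemma A_of_EndB_in_Acar: "f \<in> EndB d I \<Longrightarrow> A_of_EndB f \<in> Acar d I"
  unfolding A_of_EndB_def by (rule A_of_in_Acar[OF A_matrix_EndB])

lemma EndB_T_unit:
  assumes f: "f \<in> EndB d I" and k: "1 \<le> k" "k \<le> d"
  shows "f (T_unit k 1) = actA d I (A_of_EndB f) (T_unit k 1)"
proof -
  let ?s = "f (T_unit k 1)"
  have "actA d I (A_of_EndB f) (T_unit k 1) = T_of (\<lambda>k' i. if i = 1 then rep (?s k' 1) else 0)"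
    unfolding A_of_EndB_def T_unit_def[of k 1] actA_A_of[OF A_matrix_EndB[OF f]]
    using k by (intro T_of_cong) (simp add: sum_mult_mat_unit_transposed T_unit_def)
  also have "\<dots> = T_of (\<lambda>k' i. rep (?s k' i))"
    unfolding T_of_eq_iff
  proof (intro allI impI)
    fix k' i
    assume ki: "inrange d k' i"
    show "(if i = 1 then rep (?s k' 1) else 0) - rep (?s k' i) \<in> I k' (d+2-i)"
    proof (cases "i = 1")
      case True
      then show ?thesis
        using ideal_zero[OF ideal_T[OF ki]] by simp
    next
      case False
      then show ?thesis
        using ki EndB_T_unit_later_column[OF f, of i k' k] ideal_uminus[OF ideal_T[OF ki]]
        by (simp add: inrange_def)
    qed
  qed
  also have "\<dots> = ?s"
    using f T_unit_in_Tcar by (simp add: T_of_rep EndB_def isEndZ_def)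
  finally show ?thesis
    by simp
qed

lemma B_matrix_first_column: "B_matrix (\<lambda>i j. if j = 1 then x i else 0)"
  unfolding B_matrix_def
proof (intro allI impI)
  fix i j
  assume ij: "inrange d i j"
  show "(if j = 1 then x i else 0) \<in> I (d+2-j) (d+2-i)"
    using B_entry_eq_UNIV[OF ij] zero_mem_B_entry[OF ij] ij by (auto simp: inrange_def)
qed

lemma actB_first_column_T_unit:
  assumes "1 \<le> k" "k \<le> d"
  shows "actB d I (B_of (\<lambda>i j. if j = 1 then rep (t k i) else 0)) (T_unit k 1)
    = T_restrict (\<lambda>k' l. k' = k) t"
  unfolding T_unit_def T_restrict_def actB_B_of[OF B_matrix_first_column]
  using assms by (intro T_of_cong) (simp add: sum_mat_unit_mult)

lemma EndB_eq_actA: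
  assumes f: "f \<in> EndB d I" and t: "t \<in> Tcar d I"
  shows "f t = actA d I (A_of_EndB f) t"
proof (rule additive_maps_eq_by_slices[where p = "\<lambda>k l. k", OF _ _ _ _ _ t])
  fix m
  assume m: "1 \<le> m" "m \<le> d"
  define b where "b = B_of (\<lambda>i j. if j = 1 then rep (t m i) else 0)"
  have b_B: "b \<in> Bcar d I"
    unfolding b_def by (rule B_of_in_Bcar[OF B_matrix_first_column])
  have "f (T_restrict (\<lambda>k l. k = m) t) = f (actB d I b (T_unit m 1))"
    using actB_first_column_T_unit[OF m] by (simp add: b_def)
  also have "\<dots> = actB d I b (f (T_unit m 1))"
    using f b_B T_unit_in_Tcar by (simp add: EndB_def)
  also have "\<dots> = actB d I b (actA d I (A_of_EndB f) (T_unit m 1))"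
    using EndB_T_unit[OF f m] by simp
  also have "\<dots> = actA d I (A_of_EndB f) (actB d I b (T_unit m 1))"
    by (rule actA_actB_commute[OF A_of_EndB_in_Acar[OF f] b_B T_unit_in_Tcar, symmetric])
  also have "\<dots> = actA d I (A_of_EndB f) (T_restrict (\<lambda>k l. k = m) t)"
    using actB_first_column_T_unit[OF m] by (simp add: b_def)
  finally show "f (T_restrict (\<lambda>k l. k = m) t) = actA d I (A_of_EndB f) (T_restrict (\<lambda>k l. k = m) t)" .
qed (use f A_of_EndB_in_Acar[OF f] in
      \<open>auto simp: EndB_def isEndZ_def EndB_T_zero actA_T_zero actA_Tadd inrange_def\<close>)

lemma EndB_iff: "f \<in> EndB d I \<longleftrightarrow> (\<exists>a\<in>Acar d I. \<forall>t\<in>Tcar d I. f t = actA d I a t)"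
proof
  assume f: "f \<in> EndB d I"
  with A_of_EndB_in_Acar[OF f] show "\<exists>a\<in>Acar d I. \<forall>t\<in>Tcar d I. f t = actA d I a t"
    using EndB_eq_actA by blast
next
  assume "\<exists>a\<in>Acar d I. \<forall>t\<in>Tcar d I. f t = actA d I a t"
  then show "f \<in> EndB d I"
    using EndB_cong actA_in_EndB by metis
qed

end

theorem proposition4p2:
  fixes d :: nat and I :: "nat \<Rightarrow> nat \<Rightarrow> 'a::ring_1 set"
  assumes "d_system d I"
  shows "(\<forall>f. f \<in> EndA d I \<longleftrightarrow> (\<exists>b\<in>Bcar d I. \<forall>t\<in>Tcar d I. f t = actB d I b t)) \<and>
         (\<forall>f. f \<in> EndB d I \<longleftrightarrow> (\<exists>a\<in>Acar d I. \<forall>t\<in>Tcar d I. f t = actA d I a t))"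
proof -
  interpret d_system_ideals d I
    by unfold_locales (rule assms)
  show ?thesis
    using EndA_iff EndB_iff by blast
qed

end
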